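(* Let $\mathcal G=(V_{\min},V_{\max},E,w,\lambda)$ be a discounted payoff game, $\sigma,\sigma'$ joint strategies, and let $\nu$ be a valuation satisfying $H$ that minimises $f_\sigma$ over all solutions of $H$. If $f_{\sigma'}(\nu)<f_\sigma(\nu)$, then $\sigma'$ is better than $\sigma$.
   Context: A discounted payoff game is a tuple $\mathcal G=(V_{\min},V_{\max},E,w,\lambda)$ with $V=V_{\min}\cup V_{\max}$ finite (disjoint union), $E\subseteq V\times V$ with every vertex having an outgoing edge, $w:E\to\mathbb R$, $\lambda:E\to[0,1)$. A joint strategy is a map $\sigma:V\to V$ with $(v,\sigma(v))\in E$ for all $v$. $H$ is the system of inequations over $x\in\mathbb R^V$ containing, for each edge $e=(v,v')$, $x(v)\ge w_e+\lambda_e x(v')$ if $v\in V_{\max}$ and $x(v)\le w_e+\lambda_e x(v')$ if $v\in V_{\min}$. $\mathsf{offset}(x,(v,v'))=x(v)-(w_{(v,v')}+\lambda_{(v,v')}x(v'))$ if $v\in V_{\max}$, and $(w_{(v,v')}+\lambda_{(v,v')}x(v'))-x(v)$ otherwise. $f_\sigma(x)=\sum_{v\in V}\mathsf{offset}(x,(v,\sigma(v)))$. A joint strategy $\sigma'$ is better than $\sigma$ iff $\min\{f_{\sigma'}(x)\mid x \text{ solves } H\}<\min\{f_{\sigma}(x)\mid x\text{ solves } H\}$. *)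

theory Defs
  imports "HOL-Analysis.Analysis"
begin

definition dpg :: "'v::finite set \<Rightarrow> 'v set \<Rightarrow> ('v \<times> 'v) set \<Rightarrow> ('v \<times> 'v \<Rightarrow> real)
                    \<Rightarrow> ('v \<times> 'v \<Rightarrow> real) \<Rightarrow> bool" where
  "dpg Vmin Vmax E w lam \<longleftrightarrow>
     Vmin \<inter> Vmax = {} \<and> Vmin \<union> Vmax = UNIV \<and>
     (\<forall>v. \<exists>v'. (v, v') \<in> E) \<and>
     (\<forall>e\<in>E. 0 \<le> lam e \<and> lam e < 1)"

definition joint_strategy :: "('v \<times> 'v) set \<Rightarrow> ('v \<Rightarrow> 'v) \<Rightarrow> bool" where
  "joint_strategy E \<sigma> \<longleftrightarrow> (\<forall>v. (v, \<sigma> v) \<in> E)"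

definition solves_H :: "'v set \<Rightarrow> 'v set \<Rightarrow> ('v \<times> 'v) set \<Rightarrow> ('v \<times> 'v \<Rightarrow> real)
                    \<Rightarrow> ('v \<times> 'v \<Rightarrow> real) \<Rightarrow> ('v \<Rightarrow> real) \<Rightarrow> bool" where
  "solves_H Vmin Vmax E w lam x \<longleftrightarrow>
     (\<forall>(v, v')\<in>E. (v \<in> Vmax \<longrightarrow> x v \<ge> w (v, v') + lam (v, v') * x v') \<and>
                  (v \<in> Vmin \<longrightarrow> x v \<le> w (v, v') + lam (v, v') * x v'))"

definition offset :: "'v set \<Rightarrow> ('v \<times> 'v \<Rightarrow> real) \<Rightarrow> ('v \<times> 'v \<Rightarrow> real)
                    \<Rightarrow> ('v \<Rightarrow> real) \<Rightarrow> 'v \<times> 'v \<Rightarrow> real" where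
  "offset Vmax w lam x e =
     (if fst e \<in> Vmax then x (fst e) - (w e + lam e * x (snd e))
      else (w e + lam e * x (snd e)) - x (fst e))"

definition f_strat :: "'v::finite set \<Rightarrow> ('v \<times> 'v \<Rightarrow> real) \<Rightarrow> ('v \<times> 'v \<Rightarrow> real)
                    \<Rightarrow> ('v \<Rightarrow> 'v) \<Rightarrow> ('v \<Rightarrow> real) \<Rightarrow> real" where
  "f_strat Vmax w lam \<sigma> x = (\<Sum>v\<in>UNIV. offset Vmax w lam x (v, \<sigma> v))"

text \<open>min{f_sigma(x) | x solves H}; all offsets are nonnegative on solutions,
  so the set is bounded below and Inf is the minimum whenever it is attained.\<close>
definition opt_val :: "'v::finite set \<Rightarrow> 'v set \<Rightarrow> ('v \<times> 'v) set \<Rightarrow> ('v \<times> 'v \<Rightarrow> real)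
                    \<Rightarrow> ('v \<times> 'v \<Rightarrow> real) \<Rightarrow> ('v \<Rightarrow> 'v) \<Rightarrow> real" where
  "opt_val Vmin Vmax E w lam \<sigma> =
     Inf {f_strat Vmax w lam \<sigma> x | x. solves_H Vmin Vmax E w lam x}"

definition better :: "'v::finite set \<Rightarrow> 'v set \<Rightarrow> ('v \<times> 'v) set \<Rightarrow> ('v \<times> 'v \<Rightarrow> real)
                    \<Rightarrow> ('v \<times> 'v \<Rightarrow> real) \<Rightarrow> ('v \<Rightarrow> 'v) \<Rightarrow> ('v \<Rightarrow> 'v) \<Rightarrow> bool" where
  "better Vmin Vmax E w lam \<sigma>' \<sigma> \<longleftrightarrow>
     opt_val Vmin Vmax E w lam \<sigma>' < opt_val Vmin Vmax E w lam \<sigma>"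

end

theory Submission
  imports Defs
begin

(* On solutions of H every edge offset is nonnegative, so each f_sigma is bounded below by 0 there
   and its infimum is a genuine lower bound: opt_val sigma' <= f_sigma'(nu) < f_sigma(nu) = opt_val sigma. *)

lemma offset_nonneg:
  assumes "dpg Vmin Vmax E w lam" and "solves_H Vmin Vmax E w lam x" and "(v, v') \<in> E"
  shows "0 \<le> offset Vmax w lam x (v, v')"
proof -
  have "v \<in> Vmin \<or> v \<in> Vmax"
    using assms(1) unfolding dpg_def by blast
  moreover have "(v \<in> Vmax \<longrightarrow> w (v, v') + lam (v, v') * x v' \<le> x v) \<and>
                 (v \<in> Vmin \<longrightarrow> x v \<le> w (v, v') + lam (v, v') * x v')"
    using assms(2,3) unfolding solves_H_def by blast
  ultimately show ?thesis
    unfolding offset_def by auto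
qed

lemma f_strat_nonneg:
  assumes "dpg Vmin Vmax E w lam" and "joint_strategy E \<sigma>" and "solves_H Vmin Vmax E w lam x"
  shows "0 \<le> f_strat Vmax w lam \<sigma> x"
  unfolding f_strat_def
  using offset_nonneg[OF assms(1,3)] assms(2)
  by (simp add: joint_strategy_def sum_nonneg)

lemma opt_val_le_f_strat:
  assumes "dpg Vmin Vmax E w lam" and "joint_strategy E \<sigma>" and "solves_H Vmin Vmax E w lam x"
  shows "opt_val Vmin Vmax E w lam \<sigma> \<le> f_strat Vmax w lam \<sigma> x"
  unfolding opt_val_def
proof (rule cInf_lower)
  show "f_strat Vmax w lam \<sigma> x \<in> {f_strat Vmax w lam \<sigma> y | y. solves_H Vmin Vmax E w lam y}"
    using assms(3) by blast
  show "bdd_below {f_strat Vmax w lam \<sigma> y | y. solves_H Vmin Vmax E w lam y}"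
    using f_strat_nonneg[OF assms(1,2)] by (auto intro: bdd_belowI[of _ 0])
qed

lemma opt_val_eq_minimum:
  assumes "solves_H Vmin Vmax E w lam \<nu>"
    and "\<And>x. solves_H Vmin Vmax E w lam x \<Longrightarrow> f_strat Vmax w lam \<sigma> \<nu> \<le> f_strat Vmax w lam \<sigma> x"
  shows "opt_val Vmin Vmax E w lam \<sigma> = f_strat Vmax w lam \<sigma> \<nu>"
  unfolding opt_val_def
  using assms by (intro cInf_eq_minimum) auto

theorem lemma4p1:
  fixes Vmin Vmax :: "'v::finite set" and E :: "('v \<times> 'v) set"
    and w lam :: "'v \<times> 'v \<Rightarrow> real" and \<sigma> \<sigma>' :: "'v \<Rightarrow> 'v" and \<nu> :: "'v \<Rightarrow> real"
  assumes "dpg Vmin Vmax E w lam"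
    and "joint_strategy E \<sigma>" and "joint_strategy E \<sigma>'"
    and "solves_H Vmin Vmax E w lam \<nu>"
    and "\<forall>x. solves_H Vmin Vmax E w lam x \<longrightarrow> f_strat Vmax w lam \<sigma> \<nu> \<le> f_strat Vmax w lam \<sigma> x"
    and "f_strat Vmax w lam \<sigma>' \<nu> < f_strat Vmax w lam \<sigma> \<nu>"
  shows "better Vmin Vmax E w lam \<sigma>' \<sigma>"
proof -
  have "opt_val Vmin Vmax E w lam \<sigma>' \<le> f_strat Vmax w lam \<sigma>' \<nu>"
    using opt_val_le_f_strat[OF assms(1,3,4)] .
  also have "\<dots> < f_strat Vmax w lam \<sigma> \<nu>"
    using assms(6) .
  also have "\<dots> = opt_val Vmin Vmax E w lam \<sigma>"
    using opt_val_eq_minimum[OF assms(4)] assms(5) by simp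
  finally show ?thesis
    unfolding better_def .
qed

end
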